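(* There is an absolute constant $C$ such that for every countable $X$, $f:X^n\to\{0,1\}$, $\varepsilon,\eta\in(0,1)$, distribution $\mathcal D$ on $X$, and integer $m\ge Cn^2/\varepsilon^2$, setting $f'=f\circ\Phi_{m\to n}$, $$\big|\mathrm{AdaptiveAddMax}_\eta(f',\mathcal D)-\mathrm{BinomialMax}_\eta(f',\mathcal D)\big|\le\varepsilon.$$
   Context: $\Phi_{m\to n}$ outputs the entries of its input $S\in X^m$ at a uniformly random sequence of $n$ distinct indices. For $S\in X^{\lceil(1-\eta)m\rceil}$, $\mathrm{add}_\eta(S)$ is the set of samples in $X^m$ obtained by adding $\lfloor\eta m\rfloor$ arbitrary points to $S$ and arbitrarily permuting; $\mathrm{AdaptiveAddMax}_\eta(g,\mathcal D)=\mathbb E_{S\sim\mathcal D^{\lceil(1-\eta)m\rceil}}[\sup_{S'\in\mathrm{add}_\eta(S)}\mathbb E[g(S')]]$ for randomized $g:X^m\to\{0,1\}$. For a sample $S$ with $|S|\le m$, $\mathrm{complete}_m(S)$ is the set of samples in $X^m$ obtained by adding $m-|S|$ arbitrary points to $S$ and arbitrarily permuting; $\mathrm{BinomialMax}_\eta(g,\mathcal D)=\mathbb E_{z\sim\mathrm{Bin}(m,1-\eta)}\mathbb E_{S\sim\mathcal D^{z}}[\sup_{S'\in\mathrm{complete}_m(S)}\mathbb E[g(S')]]$. *)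

theory Defs
  imports "HOL-Probability.Probability"
begin

text \<open>Samples in X^m are lists of length m. A randomized test g : X^m -> {0,1}
  is represented by its expectation function  S |-> E[g(S)]  (a real in [0,1]).\<close>

definition phi_indices :: "nat \<Rightarrow> nat \<Rightarrow> nat list pmf" where
  "phi_indices m n = pmf_of_set {is. length is = n \<and> distinct is \<and> set is \<subseteq> {..<m}}"

definition compose_phi :: "('a list \<Rightarrow> bool) \<Rightarrow> nat \<Rightarrow> 'a list \<Rightarrow> real" where
  "compose_phi f n S =
     measure_pmf.expectation (phi_indices (length S) n) (\<lambda>is. of_bool (f (map (\<lambda>i. S ! i) is)))"

definition add_set :: "'a set \<Rightarrow> real \<Rightarrow> nat \<Rightarrow> 'a list \<Rightarrow> 'a list set" where
  "add_set X \<eta> m S = {S'. \<exists>T. set T \<subseteq> X \<and> length T = nat \<lfloor>\<eta> * real m\<rfloor> \<and> mset S' = mset S + mset T}"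

definition complete_set :: "'a set \<Rightarrow> nat \<Rightarrow> 'a list \<Rightarrow> 'a list set" where
  "complete_set X m S = {S'. \<exists>T. set T \<subseteq> X \<and> length T = m - length S \<and> mset S' = mset S + mset T}"

definition AdaptiveAddMax :: "'a set \<Rightarrow> real \<Rightarrow> nat \<Rightarrow> ('a list \<Rightarrow> real) \<Rightarrow> 'a pmf \<Rightarrow> real" where
  "AdaptiveAddMax X \<eta> m g D =
     measure_pmf.expectation (replicate_pmf (nat \<lceil>(1 - \<eta>) * real m\<rceil>) D)
       (\<lambda>S. SUP S'\<in>add_set X \<eta> m S. g S')"

definition BinomialMax :: "'a set \<Rightarrow> real \<Rightarrow> nat \<Rightarrow> ('a list \<Rightarrow> real) \<Rightarrow> 'a pmf \<Rightarrow> real" where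
  "BinomialMax X \<eta> m g D =
     measure_pmf.expectation (binomial_pmf m (1 - \<eta>))
       (\<lambda>z. measure_pmf.expectation (replicate_pmf z D)
              (\<lambda>S. SUP S'\<in>complete_set X m S. g S'))"

end

theory Submission
  imports Defs "HOL-Combinatorics.Transposition" "HOL-Combinatorics.List_Permutation"
begin

text \<open>
  Write V(S) for the best value of f \<circ> \<Phi> over completions of a partial sample S to size m.
  Since f \<circ> \<Phi> reads only n of the m coordinates, it is invariant under permutations and moves by
  at most k n / m when k coordinates change. Hence, along the prefixes of one i.i.d. sample L of
  size m, the map k \<mapsto> E[V(take k L)] is (n/m)-Lipschitz. AdaptiveAddMax is this map at the
  deterministic length \<lceil>(1-\<eta>)m\<rceil>, BinomialMax its average over a Bin(m, 1-\<eta>) length, whose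
  mean absolute deviation is at most \<surd>m. So the two differ by at most n/m (\<surd>m + 1) \<le> \<epsilon>.
\<close>

section \<open>Uniformly random distinct indices\<close>

definition distinct_indices :: "nat \<Rightarrow> nat \<Rightarrow> nat list set" where
  "distinct_indices m n = {is. length is = n \<and> distinct is \<and> set is \<subseteq> {..<m}}"

lemma finite_distinct_indices: "finite (distinct_indices m n)"
  by (rule finite_subset[of _ "{xs. set xs \<subseteq> {..<m} \<and> length xs = n}"])
     (auto simp: distinct_indices_def finite_lists_length_eq)

lemma distinct_indices_nonempty: "n \<le> m \<Longrightarrow> distinct_indices m n \<noteq> {}"
  by (auto simp: distinct_indices_def intro!: exI[of _ "[0..<n]"])

lemma compose_phi_eq_prob:
  "compose_phi f n S = measure_pmf.prob (phi_indices (length S) n) {is. f (map ((!) S) is)}"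
proof -
  have "(\<lambda>is. of_bool (f (map ((!) S) is))) = (indicator {is. f (map ((!) S) is)} :: _ \<Rightarrow> real)"
    by (auto simp: indicator_def)
  then show ?thesis by (simp add: compose_phi_def)
qed

lemma compose_phi_nonneg: "0 \<le> compose_phi f n S"
  by (simp add: compose_phi_eq_prob)

lemma compose_phi_le_1: "compose_phi f n S \<le> 1"
  by (simp add: compose_phi_eq_prob)

lemma compose_phi_eq_average:
  assumes "length S = m" "n \<le> m"
  shows "compose_phi f n S =
    (\<Sum>is\<in>distinct_indices m n. of_bool (f (map ((!) S) is))) / card (distinct_indices m n)"
  using assms finite_distinct_indices distinct_indices_nonempty
  by (simp add: compose_phi_def phi_indices_def distinct_indices_def[symmetric] integral_pmf_of_set)

lemma card_distinct_indices_containing_le: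
  assumes "i < m" "j < m"
  shows "card {is\<in>distinct_indices m n. i \<in> set is} \<le> card {is\<in>distinct_indices m n. j \<in> set is}"
proof (rule card_inj_on_le)
  let ?t = "Transposition.transpose i j"
  show "inj_on (map ?t) {is\<in>distinct_indices m n. i \<in> set is}"
    by (simp add: inj_on_def inj_map_eq_map[OF inj_transpose])
  show "map ?t ` {is\<in>distinct_indices m n. i \<in> set is} \<subseteq> {is\<in>distinct_indices m n. j \<in> set is}"
    using assms by (auto simp: distinct_indices_def distinct_map inj_on_subset[OF inj_transpose]
        Transposition.transpose_def)
qed (simp add: finite_distinct_indices)

lemma sum_card_distinct_indices_containing:
  "(\<Sum>i<m. card {is\<in>distinct_indices m n. i \<in> set is}) = card (distinct_indices m n) * n"
proof -
  have "(\<Sum>i<m. card {is\<in>distinct_indices m n. i \<in> set is})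
      = (\<Sum>i<m. \<Sum>is\<in>distinct_indices m n. of_bool (i \<in> set is))"
    by (simp add: sum.inter_filter[OF finite_distinct_indices, symmetric] of_bool_def)
  also have "\<dots> = (\<Sum>is\<in>distinct_indices m n. card ({..<m} \<inter> set is))"
    by (subst sum.swap) (simp add: sum.inter_filter[symmetric])
  also have "\<dots> = (\<Sum>is\<in>distinct_indices m n. n)"
  proof (rule sum.cong[OF refl])
    fix xs assume "xs \<in> distinct_indices m n"
    then have "{..<m} \<inter> set xs = set xs" "card (set xs) = n"
      by (auto simp: distinct_indices_def distinct_card)
    then show "card ({..<m} \<inter> set xs) = n" by simp
  qed
  finally show ?thesis by simp
qed

lemma card_distinct_indices_containing:
  assumes "i < m"
  shows "real (card {is\<in>distinct_indices m n. i \<in> set is}) = card (distinct_indices m n) * n / m"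
proof -
  have "card {is\<in>distinct_indices m n. j \<in> set is} = card {is\<in>distinct_indices m n. i \<in> set is}"
    if "j < m" for j
    using card_distinct_indices_containing_le assms that by (meson antisym)
  then have "m * card {is\<in>distinct_indices m n. i \<in> set is} = card (distinct_indices m n) * n"
    using sum_card_distinct_indices_containing[of m n] by simp
  then show ?thesis
    using assms by (simp add: field_simps flip: of_nat_mult)
qed

lemma card_distinct_indices_meeting:
  assumes "K \<subseteq> {..<m}"
  shows "real (card {is\<in>distinct_indices m n. set is \<inter> K \<noteq> {}})
           \<le> card K * (card (distinct_indices m n) * n / m)"
proof -
  have "{is\<in>distinct_indices m n. set is \<inter> K \<noteq> {}} = (\<Union>i\<in>K. {is\<in>distinct_indices m n. i \<in> set is})"
    by blast
  then have "card {is\<in>distinct_indices m n. set is \<inter> K \<noteq> {}}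
      \<le> (\<Sum>i\<in>K. card {is\<in>distinct_indices m n. i \<in> set is})"
    using finite_subset[OF assms] by (simp add: card_UN_le)
  then have "real (card {is\<in>distinct_indices m n. set is \<inter> K \<noteq> {}})
      \<le> (\<Sum>i\<in>K. real (card {is\<in>distinct_indices m n. i \<in> set is}))"
    by (simp flip: of_nat_sum)
  also have "\<dots> = (\<Sum>i\<in>K. card (distinct_indices m n) * n / m)"
    using assms by (intro sum.cong refl card_distinct_indices_containing) auto
  finally show ?thesis by simp
qed

lemma compose_phi_diff_le:
  assumes "length S1 = m" "length S2 = m" "n \<le> m" "K \<subseteq> {..<m}"
    and agree: "\<And>i. i < m \<Longrightarrow> i \<notin> K \<Longrightarrow> S1 ! i = S2 ! i"
  shows "\<bar>compose_phi f n S1 - compose_phi f n S2\<bar> \<le> card K * n / m"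
proof -
  let ?A = "distinct_indices m n"
  let ?v = "\<lambda>S is. of_bool (f (map ((!) S) is)) :: real"
  have card_pos: "real (card ?A) > 0"
    using finite_distinct_indices distinct_indices_nonempty[OF assms(3)] by (simp add: card_gt_0_iff)
  have "\<bar>(\<Sum>is\<in>?A. ?v S1 is) - (\<Sum>is\<in>?A. ?v S2 is)\<bar> \<le> (\<Sum>is\<in>?A. \<bar>?v S1 is - ?v S2 is\<bar>)"
    by (simp flip: sum_subtractf)
  also have "\<dots> \<le> (\<Sum>is\<in>?A. of_bool (set is \<inter> K \<noteq> {}))"
  proof (rule sum_mono)
    fix xs assume "xs \<in> ?A"
    then have "f (map ((!) S1) xs) = f (map ((!) S2) xs)" if "set xs \<inter> K = {}"
      using agree that by (intro arg_cong[where f=f] map_cong refl) (auto simp: distinct_indices_def)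
    then show "\<bar>?v S1 xs - ?v S2 xs\<bar> \<le> of_bool (set xs \<inter> K \<noteq> {})"
      by (cases "set xs \<inter> K = {}") simp_all
  qed
  also have "\<dots> = real (card {is\<in>?A. set is \<inter> K \<noteq> {}})"
    using finite_distinct_indices by (simp add: sum.inter_filter[symmetric] of_bool_def)
  also have "\<dots> \<le> card K * (card ?A * n / m)"
    by (rule card_distinct_indices_meeting[OF assms(4)])
  finally show ?thesis
    using card_pos
    by (simp add: compose_phi_eq_average[OF assms(1,3)] compose_phi_eq_average[OF assms(2,3)]
        flip: diff_divide_distrib add: divide_le_eq mult_ac)
qed

lemma compose_phi_mset_eq:
  assumes "mset S1 = mset S2" "n \<le> length S1"
  shows "compose_phi f n S1 = compose_phi f n S2"
proof -
  define m where "m = length S1"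
  have len: "length S2 = m" using assms by (metis m_def mset_eq_length)
  obtain p where p: "bij_betw p {..<m} {..<m}" "\<And>i. i < m \<Longrightarrow> S1 ! i = S2 ! p i"
    using permutation_Ex_bij[of S1 S2] assms len unfolding m_def by auto
  have inj: "inj_on (map p) (distinct_indices m n)"
  proof (rule inj_onI)
    fix xs ys assume "xs \<in> distinct_indices m n" "ys \<in> distinct_indices m n" "map p xs = map p ys"
    then show "xs = ys"
      using inj_on_subset[of p "{..<m}" "set xs \<union> set ys"] p(1)
      by (auto simp: distinct_indices_def bij_betw_def inj_on_map_eq_map)
  qed
  have "map p ` distinct_indices m n \<subseteq> distinct_indices m n"
    using p(1) by (fastforce simp: distinct_indices_def distinct_map bij_betw_def intro: inj_on_subset)
  then have image: "map p ` distinct_indices m n = distinct_indices m n"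
    by (rule card_subset_eq[OF finite_distinct_indices]) (simp add: card_image[OF inj])
  have "(\<Sum>is\<in>distinct_indices m n. of_bool (f (map ((!) S1) is)) :: real)
      = (\<Sum>is\<in>distinct_indices m n. of_bool (f (map ((!) S2) (map p is))))"
    using p(2) by (intro sum.cong refl arg_cong[where f="\<lambda>xs. of_bool (f xs)"])
        (auto simp: distinct_indices_def)
  also have "\<dots> = (\<Sum>is\<in>distinct_indices m n. of_bool (f (map ((!) S2) is)))"
    by (subst (2) image[symmetric]) (simp add: sum.reindex[OF inj])
  finally show ?thesis
    using assms(2) len by (simp add: compose_phi_eq_average m_def)
qed

section \<open>Best completions of a partial sample\<close>

definition completion_max :: "'a set \<Rightarrow> nat \<Rightarrow> ('a list \<Rightarrow> real) \<Rightarrow> 'a list \<Rightarrow> real" where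
  "completion_max X m g S = (SUP S'\<in>complete_set X m S. g S')"

lemma length_complete_set:
  assumes "S' \<in> complete_set X m S" "length S \<le> m"
  shows "length S' = m"
proof -
  obtain T where "length T = m - length S" "mset S' = mset S + mset T"
    using assms(1) unfolding complete_set_def by blast
  then show ?thesis
    using assms(2) by (metis add_diff_inverse_nat not_less size_mset size_union)
qed

lemma complete_set_nonempty:
  assumes "x \<in> X"
  shows "complete_set X m S \<noteq> {}"
proof -
  have "S @ replicate (m - length S) x \<in> complete_set X m S"
    using assms unfolding complete_set_def by (auto intro!: exI[of _ "replicate (m - length S) x"])
  then show ?thesis by blast
qed

lemma complete_set_append_subset:
  assumes "set R \<subseteq> X" "length S + length R \<le> m"
  shows "complete_set X m (S @ R) \<subseteq> complete_set X m S"
proof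
  fix S' assume "S' \<in> complete_set X m (S @ R)"
  then obtain T where "set T \<subseteq> X" "length T = m - length (S @ R)" "mset S' = mset (S @ R) + mset T"
    by (auto simp: complete_set_def)
  then show "S' \<in> complete_set X m S"
    using assms unfolding complete_set_def by (intro CollectI exI[of _ "R @ T"]) auto
qed

lemma completion_max_compose_phi_bounds:
  assumes "x \<in> X"
  shows "0 \<le> completion_max X m (compose_phi f n) S" "completion_max X m (compose_phi f n) S \<le> 1"
proof -
  obtain S' where S': "S' \<in> complete_set X m S"
    using complete_set_nonempty[OF assms] by blast
  have bdd: "bdd_above (compose_phi f n ` complete_set X m S)"
    by (rule bdd_aboveI[of _ 1]) (auto simp: compose_phi_le_1)
  show "0 \<le> completion_max X m (compose_phi f n) S"
    using compose_phi_nonneg cSUP_upper[OF S' bdd] unfolding completion_max_def by (rule order_trans)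
  show "completion_max X m (compose_phi f n) S \<le> 1"
    unfolding completion_max_def
    by (rule cSUP_least[OF complete_set_nonempty[OF assms]]) (rule compose_phi_le_1)
qed

text \<open>Pinning the first completion points to R changes at most length R coordinates.\<close>
lemma compose_phi_completion_append:
  assumes S': "S' \<in> complete_set X m S" and R: "set R \<subseteq> X" "length S + length R \<le> m"
    and "n \<le> m"
  obtains S'' where "S'' \<in> complete_set X m (S @ R)"
    "compose_phi f n S' \<le> compose_phi f n S'' + length R * n / m"
proof -
  obtain T where T: "set T \<subseteq> X" "length T = m - length S" "mset S' = mset S + mset T"
    using S' by (auto simp: complete_set_def)
  define S'' where "S'' = S @ R @ drop (length R) T"
  have "S'' \<in> complete_set X m (S @ R)"
    unfolding complete_set_def S''_def using T R
    by (intro CollectI exI[of _ "drop (length R) T"]) (auto dest: in_set_dropD)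
  moreover have "compose_phi f n S' = compose_phi f n (S @ T)"
    using T assms length_complete_set[OF S'] by (intro compose_phi_mset_eq) auto
  moreover have "\<bar>compose_phi f n (S @ T) - compose_phi f n S''\<bar>
      \<le> card {length S..<length S + length R} * n / m"
    using T assms by (intro compose_phi_diff_le) (auto simp: S''_def nth_append)
  ultimately show ?thesis
    using that by fastforce
qed

lemma completion_max_append:
  assumes "x \<in> X" "set R \<subseteq> X" "length S + length R \<le> m" "n \<le> m"
  shows "completion_max X m (compose_phi f n) (S @ R) \<le> completion_max X m (compose_phi f n) S"
    "completion_max X m (compose_phi f n) S
       \<le> completion_max X m (compose_phi f n) (S @ R) + length R * n / m"
proof -
  have bdd: "bdd_above (compose_phi f n ` complete_set X m S0)" for S0
    by (rule bdd_aboveI[of _ 1]) (auto simp: compose_phi_le_1)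
  show "completion_max X m (compose_phi f n) (S @ R) \<le> completion_max X m (compose_phi f n) S"
    unfolding completion_max_def
    using complete_set_nonempty[OF assms(1)] bdd complete_set_append_subset[OF assms(2,3)]
    by (rule cSUP_subset_mono) simp
  show "completion_max X m (compose_phi f n) S
      \<le> completion_max X m (compose_phi f n) (S @ R) + length R * n / m"
    unfolding completion_max_def
  proof (rule cSUP_least[OF complete_set_nonempty[OF assms(1)]])
    fix S' assume "S' \<in> complete_set X m S"
    then obtain S'' where "S'' \<in> complete_set X m (S @ R)"
      "compose_phi f n S' \<le> compose_phi f n S'' + length R * n / m"
      using compose_phi_completion_append assms(2-4) by blast
    then show "compose_phi f n S' \<le> (SUP S'\<in>complete_set X m (S @ R). compose_phi f n S') + length R * n / m"
      using cSUP_upper[OF _ bdd] by (smt (verit))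
  qed
qed

lemma completion_max_take_diff:
  assumes "x \<in> X" "length L = m" "set L \<subseteq> X" "a \<le> m" "b \<le> m" "n \<le> m"
  shows "\<bar>completion_max X m (compose_phi f n) (take a L) - completion_max X m (compose_phi f n) (take b L)\<bar>
           \<le> \<bar>real a - real b\<bar> * n / m"
proof -
  have "\<bar>completion_max X m (compose_phi f n) (take a L) - completion_max X m (compose_phi f n) (take b L)\<bar>
           \<le> real (b - a) * n / m" if "a \<le> b" "b \<le> m" for a b
  proof -
    define R where "R = take (b - a) (drop a L)"
    have "take b L = take a L @ R" "length R = b - a"
      using that assms(2) by (simp_all add: R_def take_add[symmetric])
    moreover have "set R \<subseteq> X"
      using assms(3) by (auto simp: R_def dest: in_set_takeD in_set_dropD)
    ultimately show ?thesis
      using completion_max_append[OF assms(1), of R "take a L" m n f] that assms(2,6)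
      by (simp add: abs_le_iff)
  qed
  from this[of a b] this[of b a] assms(4,5) show ?thesis
    by (cases "a \<le> b") (simp_all add: abs_minus_commute)
qed

section \<open>Deviation of the binomial distribution\<close>

lemma expectation_binomial_pmf_Suc:
  fixes g :: "nat \<Rightarrow> real"
  assumes p: "p \<in> {0..1}"
  shows "measure_pmf.expectation (binomial_pmf (Suc n) p) g =
     measure_pmf.expectation (binomial_pmf n p) (\<lambda>k. p * g (Suc k) + (1 - p) * g k)"
proof -
  let ?shift = "\<lambda>b. map_pmf (\<lambda>k. of_bool b + k) (binomial_pmf n p)"
  have "binomial_pmf (Suc n) p = bernoulli_pmf p \<bind> ?shift"
    by (simp add: binomial_pmf_Suc[OF p] map_pmf_def of_bool_def)
  then have "measure_pmf.expectation (binomial_pmf (Suc n) p) g =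
      (\<Sum>b\<in>UNIV. pmf (bernoulli_pmf p) b *\<^sub>R measure_pmf.expectation (?shift b) g)"
    using p by (simp only:) (rule pmf_expectation_bind, auto simp: finite_set_pmf_binomial_pmf)
  also have "\<dots> = measure_pmf.expectation (binomial_pmf n p) (\<lambda>k. p * g (Suc k) + (1 - p) * g k)"
    using p by (simp add: UNIV_bool)
  finally show ?thesis .
qed

text \<open>Pointwise, p (Y + 1 - p)^2 + (1 - p) (Y - p)^2 = Y^2 + p (1 - p), so no knowledge of the
  mean is needed for the induction.\<close>
lemma binomial_pmf_variance:
  fixes p :: real
  assumes p: "p \<in> {0..1}"
  shows "measure_pmf.expectation (binomial_pmf n p) (\<lambda>k. (real k - n * p)\<^sup>2) = n * p * (1 - p)"
proof (induction n)
  case 0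
  then show ?case using p by (simp add: binomial_pmf_0)
next
  case (Suc n)
  have "p * (real (Suc k) - Suc n * p)\<^sup>2 + (1 - p) * (real k - Suc n * p)\<^sup>2
      = (real k - n * p)\<^sup>2 + p * (1 - p)" for k
    by (simp add: power2_eq_square algebra_simps)
  then have "measure_pmf.expectation (binomial_pmf (Suc n) p) (\<lambda>k. (real k - Suc n * p)\<^sup>2)
      = measure_pmf.expectation (binomial_pmf n p) (\<lambda>k. (real k - n * p)\<^sup>2 + p * (1 - p))"
    by (simp add: expectation_binomial_pmf_Suc[OF p])
  also have "\<dots> = Suc n * p * (1 - p)"
    using p Suc.IH by (simp add: algebra_simps)
  finally show ?case .
qed

lemma (in prob_space) expectation_abs_le_sqrt_second_moment:
  fixes X :: "'a \<Rightarrow> real"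
  assumes "integrable M X" "integrable M (\<lambda>x. (X x)\<^sup>2)"
  shows "expectation (\<lambda>x. \<bar>X x\<bar>) \<le> sqrt (expectation (\<lambda>x. (X x)\<^sup>2))"
proof -
  have "variance (\<lambda>x. \<bar>X x\<bar>) = expectation (\<lambda>x. (X x)\<^sup>2) - (expectation (\<lambda>x. \<bar>X x\<bar>))\<^sup>2"
    using assms by (subst variance_eq) auto
  then show ?thesis
    using variance_positive[of "\<lambda>x. \<bar>X x\<bar>"] by (simp add: real_le_rsqrt)
qed

lemma binomial_pmf_abs_deviation:
  fixes p :: real
  assumes p: "p \<in> {0..1}"
  shows "measure_pmf.expectation (binomial_pmf n p) (\<lambda>k. \<bar>real k - n * p\<bar>) \<le> sqrt n"
proof -
  have "measure_pmf.expectation (binomial_pmf n p) (\<lambda>k. \<bar>real k - n * p\<bar>) \<le> sqrt (n * p * (1 - p))"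
    using measure_pmf.expectation_abs_le_sqrt_second_moment[of "binomial_pmf n p" "\<lambda>k. real k - n * p"]
    by (simp add: binomial_pmf_variance[OF p] integrable_binomial_pmf[OF p])
  also have "\<dots> \<le> sqrt n"
    using p mult_left_le[of "p * (1 - p)" "real n"]
    by (intro real_sqrt_le_mono) (simp add: mult.assoc mult_le_one)
  finally show ?thesis .
qed

lemma expectation_binomial_pmf_lipschitz:
  fixes F :: "nat \<Rightarrow> real" and p :: real
  assumes p: "p \<in> {0..1}" and z: "z \<le> n" "\<bar>real z - real n * p\<bar> \<le> 1"
    and lip: "\<And>a b. a \<le> n \<Longrightarrow> b \<le> n \<Longrightarrow> \<bar>F a - F b\<bar> \<le> L * \<bar>real a - real b\<bar>"
    and "L \<ge> 0"
  shows "\<bar>F z - measure_pmf.expectation (binomial_pmf n p) F\<bar> \<le> L * (sqrt n + 1)"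
proof -
  let ?E = "measure_pmf.expectation (binomial_pmf n p)"
  have support: "k \<le> n" if "k \<in> set_pmf (binomial_pmf n p)" for k
    using that p by (auto simp: set_pmf_binomial_eq split: if_splits)
  have "\<bar>F z - ?E F\<bar> = \<bar>?E (\<lambda>k. F z - F k)\<bar>"
    using p by simp
  also have "\<dots> \<le> ?E (\<lambda>k. \<bar>F z - F k\<bar>)"
    by (rule integral_abs_bound)
  also have "\<dots> \<le> ?E (\<lambda>k. L * (\<bar>real k - real n * p\<bar> + 1))"
  proof (rule integral_mono_AE)
    show "AE k in binomial_pmf n p. \<bar>F z - F k\<bar> \<le> L * (\<bar>real k - real n * p\<bar> + 1)"
    proof (rule AE_pmfI)
      fix k assume "k \<in> set_pmf (binomial_pmf n p)"
      then have "\<bar>F z - F k\<bar> \<le> L * \<bar>real z - real k\<bar>"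
        using lip z support by blast
      also have "\<dots> \<le> L * (\<bar>real k - real n * p\<bar> + 1)"
        using z \<open>L \<ge> 0\<close> by (intro mult_left_mono) auto
      finally show "\<bar>F z - F k\<bar> \<le> L * (\<bar>real k - real n * p\<bar> + 1)" .
    qed
  qed (use p in simp_all)
  also have "\<dots> = L * (?E (\<lambda>k. \<bar>real k - real n * p\<bar>) + 1)"
    using p by simp
  also have "\<dots> \<le> L * (sqrt n + 1)"
    using binomial_pmf_abs_deviation[OF p] \<open>L \<ge> 0\<close> by (intro mult_left_mono) auto
  finally show ?thesis .
qed

section \<open>Coupling the two sampling schemes\<close>

lemma map_pmf_take_replicate_pmf:
  assumes "z \<le> m"
  shows "map_pmf (take z) (replicate_pmf m D) = replicate_pmf z D"
proof -
  obtain k where m: "m = z + k" using assms le_Suc_ex by blast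
  have "map_pmf (take z) (replicate_pmf m D) =
     replicate_pmf z D \<bind> (\<lambda>xs. replicate_pmf k D \<bind> (\<lambda>ys. return_pmf (take z (xs @ ys))))"
    unfolding m replicate_pmf_distrib by (simp add: map_bind_pmf)
  also have "\<dots> = replicate_pmf z D \<bind> return_pmf"
    by (intro bind_pmf_cong refl) (simp add: set_replicate_pmf)
  finally show ?thesis by (simp add: bind_return_pmf')
qed

lemma nat_floor_eq_diff_nat_ceiling:
  fixes \<eta> :: real
  assumes "0 \<le> \<eta>" "\<eta> \<le> 1"
  shows "nat \<lfloor>\<eta> * m\<rfloor> = m - nat \<lceil>(1 - \<eta>) * m\<rceil>"
proof -
  have "\<lceil>(1 - \<eta>) * m\<rceil> = int m - \<lfloor>\<eta> * m\<rfloor>"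
    using ceiling_add_of_int[of "- (\<eta> * m)" "int m"] by (simp add: algebra_simps ceiling_minus)
  moreover have "0 \<le> \<lfloor>\<eta> * m\<rfloor>" "\<lfloor>\<eta> * m\<rfloor> \<le> int m"
    using assms mult_left_le_one_le[of "real m" \<eta>] by (simp_all add: floor_le_iff)
  ultimately show ?thesis by linarith
qed

lemma add_set_eq_complete_set:
  assumes "0 \<le> \<eta>" "\<eta> \<le> 1" "length S = nat \<lceil>(1 - \<eta>) * m\<rceil>"
  shows "add_set X \<eta> m S = complete_set X m S"
  using assms by (simp add: add_set_def complete_set_def nat_floor_eq_diff_nat_ceiling)

lemma AdaptiveAddMax_BinomialMax_compose_phi_diff:
  fixes X :: "'a set" and D :: "'a pmf"
  assumes \<eta>: "0 < \<eta>" "\<eta> < 1" and DX: "set_pmf D \<subseteq> X" and "n \<le> m"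
  shows "\<bar>AdaptiveAddMax X \<eta> m (compose_phi f n) D - BinomialMax X \<eta> m (compose_phi f n) D\<bar>
           \<le> n / m * (sqrt m + 1)"
proof -
  let ?V = "completion_max X m (compose_phi f n)"
  let ?L = "replicate_pmf m D"
  define F where "F k = measure_pmf.expectation ?L (\<lambda>L. ?V (take k L))" for k
  define z where "z = nat \<lceil>(1 - \<eta>) * m\<rceil>"
  obtain x where x: "x \<in> X" using DX set_pmf_not_empty[of D] by blast
  have sample: "length L = m" "set L \<subseteq> X" if "L \<in> set_pmf ?L" for L
    using that DX by (auto simp: set_replicate_pmf)
  have expectation_take: "measure_pmf.expectation (replicate_pmf k D) (\<lambda>S. h S)
      = measure_pmf.expectation ?L (\<lambda>L. h (take k L))" if "k \<le> m" for k and h :: "_ \<Rightarrow> real"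
    by (simp flip: map_pmf_take_replicate_pmf[OF that])
  have "0 \<le> (1 - \<eta>) * m" "(1 - \<eta>) * m \<le> m"
    using \<eta> mult_left_le_one_le[of "real m" "1 - \<eta>"] by simp_all
  then have z: "z \<le> m" "\<bar>real z - real m * (1 - \<eta>)\<bar> \<le> 1"
    unfolding z_def using le_of_int_ceiling[of "(1 - \<eta>) * m"] ceiling_correct[of "(1 - \<eta>) * m"]
    by (simp_all add: ceiling_le_iff abs_le_iff mult.commute)
  have "add_set X \<eta> m (take z L) = complete_set X m (take z L)" if "L \<in> set_pmf ?L" for L
    using \<eta> z(1) sample[OF that] by (intro add_set_eq_complete_set) (auto simp: z_def)
  then have "AdaptiveAddMax X \<eta> m (compose_phi f n) D = F z"
    unfolding AdaptiveAddMax_def F_def z_def[symmetric] expectation_take[OF z(1)]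
    by (intro integral_cong_AE AE_pmfI) (simp_all add: completion_max_def)
  moreover have "BinomialMax X \<eta> m (compose_phi f n) D = measure_pmf.expectation (binomial_pmf m (1 - \<eta>)) F"
    unfolding BinomialMax_def F_def
  proof (intro integral_cong_AE AE_pmfI)
    fix k assume "k \<in> set_pmf (binomial_pmf m (1 - \<eta>))"
    then have "k \<le> m" using \<eta> by simp
    then show "measure_pmf.expectation (replicate_pmf k D) (\<lambda>S. SUP S'\<in>complete_set X m S. compose_phi f n S')
        = measure_pmf.expectation ?L (\<lambda>L. ?V (take k L))"
      unfolding completion_max_def by (rule expectation_take)
  qed simp_all
  moreover have "\<bar>F a - F b\<bar> \<le> n / m * \<bar>real a - real b\<bar>" if "a \<le> m" "b \<le> m" for a b
  proof -
    have "\<bar>?V (take k L)\<bar> \<le> 1" for k L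
      using completion_max_compose_phi_bounds[OF x, of m f n "take k L"] by simp
    then have integrable_V: "integrable ?L (\<lambda>L. ?V (take k L))" for k
      by (intro measure_pmf.integrable_const_bound[where B=1]) auto
    then have "\<bar>F a - F b\<bar> = \<bar>measure_pmf.expectation ?L (\<lambda>L. ?V (take a L) - ?V (take b L))\<bar>"
      by (simp add: F_def)
    also have "\<dots> \<le> measure_pmf.expectation ?L (\<lambda>L. \<bar>?V (take a L) - ?V (take b L)\<bar>)"
      by (rule integral_abs_bound)
    also have "\<dots> \<le> \<bar>real a - real b\<bar> * n / m"
    proof (rule measure_pmf.integral_le_const)
      show "integrable ?L (\<lambda>L. \<bar>?V (take a L) - ?V (take b L)\<bar>)"
        using integrable_V by simp
      show "AE L in ?L. \<bar>?V (take a L) - ?V (take b L)\<bar> \<le> \<bar>real a - real b\<bar> * n / m"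
        using completion_max_take_diff[OF x _ _ that \<open>n \<le> m\<close>] sample by (simp add: AE_pmfI)
    qed
    finally show ?thesis by (simp add: mult.commute)
  qed
  ultimately show ?thesis
    using expectation_binomial_pmf_lipschitz[of "1 - \<eta>" z m F "n / m"] \<eta> z by simp
qed

lemma sample_size_bound:
  fixes \<epsilon> :: real and n m :: nat
  assumes \<epsilon>: "0 < \<epsilon>" "\<epsilon> < 1" and m: "4 * real n ^ 2 / \<epsilon> ^ 2 \<le> real m"
  shows "n \<le> m" "n / m * (sqrt m + 1) \<le> \<epsilon>"
proof -
  define s where "s = sqrt m"
  have "(2 * n / \<epsilon>)\<^sup>2 \<le> m"
    using m by (simp add: power_divide power_mult_distrib)
  then have s_ge: "2 * n / \<epsilon> \<le> s"
    unfolding s_def by (simp add: real_le_rsqrt)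
  moreover have "2 * n \<le> 2 * n / \<epsilon>"
    using \<epsilon> mult_left_le[of \<epsilon> "real n"] by (simp add: le_divide_eq)
  ultimately have "2 * n \<le> s" by linarith
  show "n \<le> m"
  proof (cases "n = 0")
    case False
    then have "1 \<le> s" using \<open>2 * n \<le> s\<close> by linarith
    then have "s * 1 \<le> s * s" by (intro mult_left_mono) auto
    then have "n \<le> s * s" using \<open>2 * n \<le> s\<close> by linarith
    then show ?thesis by (simp add: s_def)
  qed simp
  show "n / m * (sqrt m + 1) \<le> \<epsilon>"
  proof (cases "n = 0")
    case False
    then have "1 \<le> s" using \<open>2 * n \<le> s\<close> by linarith
    have "n / m * (sqrt m + 1) = n / (s * s) * (s + 1)"
      by (simp add: s_def)
    also have "\<dots> \<le> n / (s * s) * (2 * s)"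
      using \<open>1 \<le> s\<close> by (intro mult_left_mono) auto
    also have "\<dots> = 2 * n / s"
      using \<open>1 \<le> s\<close> by (simp add: field_simps)
    also have "\<dots> \<le> \<epsilon>"
      using s_ge \<epsilon> \<open>1 \<le> s\<close> by (simp add: field_simps)
    finally show ?thesis .
  qed (use \<epsilon> in simp)
qed

theorem mainTheorem18:
  shows "\<exists>C::real. C > 0 \<and>
    (\<forall>(X::nat set) (f::nat list \<Rightarrow> bool) (n::nat) (\<epsilon>::real) (\<eta>::real) (D::nat pmf) (m::nat).
       0 < \<epsilon> \<longrightarrow> \<epsilon> < 1 \<longrightarrow> 0 < \<eta> \<longrightarrow> \<eta> < 1 \<longrightarrow>
       set_pmf D \<subseteq> X \<longrightarrow>
       real m \<ge> C * real n ^ 2 / \<epsilon> ^ 2 \<longrightarrow>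
       \<bar>AdaptiveAddMax X \<eta> m (compose_phi f n) D - BinomialMax X \<eta> m (compose_phi f n) D\<bar> \<le> \<epsilon>)"
proof (intro exI[of _ 4] conjI allI impI)
  fix X :: "nat set" and f :: "nat list \<Rightarrow> bool" and n m :: nat and \<epsilon> \<eta> :: real and D :: "nat pmf"
  assume \<epsilon>: "0 < \<epsilon>" "\<epsilon> < 1" and \<eta>: "0 < \<eta>" "\<eta> < 1" and DX: "set_pmf D \<subseteq> X"
    and m: "4 * real n ^ 2 / \<epsilon> ^ 2 \<le> real m"
  note size = sample_size_bound[OF \<epsilon> m]
  show "\<bar>AdaptiveAddMax X \<eta> m (compose_phi f n) D - BinomialMax X \<eta> m (compose_phi f n) D\<bar> \<le> \<epsilon>"
    using AdaptiveAddMax_BinomialMax_compose_phi_diff[OF \<eta> DX size(1)] size(2) by (rule order_trans)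
qed simp

end
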